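(* There is no nontrivial strongly regular graph that is both a Neumaier graph and a circulant graph.
   Context: All graphs are finite, simple, undirected and connected. A graph is edge-regular if it is regular and any two adjacent vertices have a constant number of common neighbours. A clique $C$ is a regular clique with nexus $a$ if every vertex not in $C$ has exactly $a$ neighbours in $C$. A Neumaier graph is a non-complete edge-regular graph containing a regular clique. A strongly regular graph with parameters $(n,k,\lambda,\mu)$ is a non-complete connected $k$-regular graph on $n$ vertices in which adjacent vertices have $\lambda$ common neighbours and non-adjacent vertices have $\mu$ common neighbours; it is nontrivial if $0<\mu<k$. A circulant graph on $n$ vertices is a Cayley graph $\mathrm{Cay}(\mathbb{Z}_n,S)$, where $S\subseteq\mathbb{Z}_n\setminus\{0\}$ is closed under negation and $x,y$ are adjacent iff $x-y\in S$. *)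

theory Defs
  imports Main
begin

definition simple_graph :: "'a set \<Rightarrow> ('a \<Rightarrow> 'a \<Rightarrow> bool) \<Rightarrow> bool" where
  "simple_graph V E \<longleftrightarrow> finite V \<and> V \<noteq> {} \<and>
     (\<forall>x\<in>V. \<forall>y\<in>V. E x y \<longleftrightarrow> E y x) \<and> (\<forall>x\<in>V. \<not> E x x)"

definition nbrs :: "'a set \<Rightarrow> ('a \<Rightarrow> 'a \<Rightarrow> bool) \<Rightarrow> 'a \<Rightarrow> 'a set" where
  "nbrs V E x = {y\<in>V. E x y}"

definition connected_graph :: "'a set \<Rightarrow> ('a \<Rightarrow> 'a \<Rightarrow> bool) \<Rightarrow> bool" where
  "connected_graph V E \<longleftrightarrow>
     (\<forall>x\<in>V. \<forall>y\<in>V. (\<lambda>u v. u \<in> V \<and> v \<in> V \<and> E u v)\<^sup>*\<^sup>* x y)"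

definition regular_graph :: "'a set \<Rightarrow> ('a \<Rightarrow> 'a \<Rightarrow> bool) \<Rightarrow> nat \<Rightarrow> bool" where
  "regular_graph V E k \<longleftrightarrow> (\<forall>x\<in>V. card (nbrs V E x) = k)"

definition complete_graph :: "'a set \<Rightarrow> ('a \<Rightarrow> 'a \<Rightarrow> bool) \<Rightarrow> bool" where
  "complete_graph V E \<longleftrightarrow> (\<forall>x\<in>V. \<forall>y\<in>V. x \<noteq> y \<longrightarrow> E x y)"

definition edge_regular :: "'a set \<Rightarrow> ('a \<Rightarrow> 'a \<Rightarrow> bool) \<Rightarrow> nat \<Rightarrow> nat \<Rightarrow> bool" where
  "edge_regular V E k lam \<longleftrightarrow> regular_graph V E k \<and>
     (\<forall>x\<in>V. \<forall>y\<in>V. E x y \<longrightarrow> card (nbrs V E x \<inter> nbrs V E y) = lam)"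

definition is_clique :: "'a set \<Rightarrow> ('a \<Rightarrow> 'a \<Rightarrow> bool) \<Rightarrow> 'a set \<Rightarrow> bool" where
  "is_clique V E C \<longleftrightarrow> C \<subseteq> V \<and> C \<noteq> {} \<and> (\<forall>x\<in>C. \<forall>y\<in>C. x \<noteq> y \<longrightarrow> E x y)"

definition regular_clique :: "'a set \<Rightarrow> ('a \<Rightarrow> 'a \<Rightarrow> bool) \<Rightarrow> 'a set \<Rightarrow> nat \<Rightarrow> bool" where
  "regular_clique V E C a \<longleftrightarrow> is_clique V E C \<and>
     (\<forall>x\<in>V - C. card (nbrs V E x \<inter> C) = a)"

definition neumaier_graph :: "'a set \<Rightarrow> ('a \<Rightarrow> 'a \<Rightarrow> bool) \<Rightarrow> bool" where
  "neumaier_graph V E \<longleftrightarrow> simple_graph V E \<and> connected_graph V E \<and> \<not> complete_graph V E \<and>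
     (\<exists>k lam. edge_regular V E k lam) \<and> (\<exists>C a. regular_clique V E C a)"

definition strongly_regular :: "'a set \<Rightarrow> ('a \<Rightarrow> 'a \<Rightarrow> bool) \<Rightarrow> nat \<Rightarrow> nat \<Rightarrow> nat \<Rightarrow> nat \<Rightarrow> bool" where
  "strongly_regular V E n k lam mu \<longleftrightarrow> simple_graph V E \<and> connected_graph V E \<and>
     \<not> complete_graph V E \<and> card V = n \<and> edge_regular V E k lam \<and>
     (\<forall>x\<in>V. \<forall>y\<in>V. x \<noteq> y \<and> \<not> E x y \<longrightarrow> card (nbrs V E x \<inter> nbrs V E y) = mu)"

definition nontrivial_srg :: "'a set \<Rightarrow> ('a \<Rightarrow> 'a \<Rightarrow> bool) \<Rightarrow> bool" where
  "nontrivial_srg V E \<longleftrightarrow> (\<exists>n k lam mu. strongly_regular V E n k lam mu \<and> 0 < mu \<and> mu < k)"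

text \<open>Circulant graph Cay(Z_n, S): vertices {0..<n} (integers), S a subset of
  nonzero residues closed under negation, x ~ y iff (x - y) mod n in S.\<close>
definition circulant_conn :: "int \<Rightarrow> int set \<Rightarrow> bool" where
  "circulant_conn n S \<longleftrightarrow> 0 < n \<and> S \<subseteq> {1..<n} \<and> (\<forall>s\<in>S. (- s) mod n \<in> S)"

definition circ_adj :: "int \<Rightarrow> int set \<Rightarrow> int \<Rightarrow> int \<Rightarrow> bool" where
  "circ_adj n S x y \<longleftrightarrow> (x - y) mod n \<in> S"

definition graph_iso :: "'a set \<Rightarrow> ('a \<Rightarrow> 'a \<Rightarrow> bool) \<Rightarrow> 'b set \<Rightarrow> ('b \<Rightarrow> 'b \<Rightarrow> bool) \<Rightarrow> bool" where
  "graph_iso V E W F \<longleftrightarrow> (\<exists>f. bij_betw f V W \<and> (\<forall>x\<in>V. \<forall>y\<in>V. E x y \<longleftrightarrow> F (f x) (f y)))"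

definition circulant_graph :: "'a set \<Rightarrow> ('a \<Rightarrow> 'a \<Rightarrow> bool) \<Rightarrow> bool" where
  "circulant_graph V E \<longleftrightarrow>
     (\<exists>n S. circulant_conn n S \<and> graph_iso V E {0..<n} (circ_adj n S))"

end

theory Submission
  imports Defs "HOL-Number_Theory.Cong" "HOL-Computational_Algebra.Polynomial"
begin

text \<open>
  Double counting around a regular clique of size \<open>c\<close> and nexus \<open>a\<close> shows that
  \<open>\<theta> = c - 1 - a\<close> is an integral root of \<open>x\<^sup>2 = (\<lambda> - \<mu>) x + (k - \<mu>)\<close>, i.e. the graph
  has an integral eigenvalue.  For a circulant graph \<open>Cay(\<int>\<^sub>n, S)\<close>, strong regularity says
  that \<open>P = \<Sum>s\<in>S. X\<^sup>s\<close> satisfies \<open>P\<^sup>2 = (\<lambda> - \<mu>) P + (k - \<mu>) + \<mu> J\<close> and \<open>P J = k J\<close> in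
  \<open>\<int>[X]/(X\<^sup>n - 1) \<cong> \<int>[\<int>\<^sub>n]\<close>.  Reducing \<open>P\<^sup>q\<close> with these relations and comparing with
  \<open>P\<^sup>q \<equiv> P(X\<^sup>q) (mod q)\<close> shows, because both eigenvalues \<open>\<theta>\<close> and \<open>\<lambda> - \<mu> - \<theta>\<close> are
  integers, that every prime \<open>q\<close> not dividing \<open>n (2\<theta> - \<lambda> + \<mu>)\<close> is a multiplier of \<open>S\<close>.
  For a prime \<open>p\<close> dividing \<open>n\<close> the same congruence at \<open>q = p\<close> makes membership in \<open>S\<close>
  constant on the residues prime to \<open>p\<close> if \<open>p\<close> does not divide \<open>2\<theta> - \<lambda> + \<mu>\<close>, and makes
  \<open>S\<close> invariant under translation by \<open>n/p\<close> off the subgroup \<open>(n/p)\<int>\<^sub>n\<close> otherwise.  Either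
  way \<open>\<mu> = 0\<close>, \<open>\<mu> = k\<close> or \<open>\<lambda> = k - 1\<close>, which a nontrivial non-complete strongly regular
  graph excludes.
\<close>

section \<open>Polynomials modulo \<open>X\<^sup>n - 1\<close>\<close>

text \<open>
  The group ring \<open>R[\<int>\<^sub>n]\<close> is modelled by \<open>R[X]\<close> modulo \<open>X\<^sup>n - 1\<close>; \<open>cyclic_coeff n A y\<close> is
  the coefficient of the residue \<open>y\<close> in the image of \<open>A\<close>.
\<close>

definition cyclic_coeff :: "int \<Rightarrow> 'a::comm_ring_1 poly \<Rightarrow> int \<Rightarrow> 'a" where
  "cyclic_coeff n A y = (\<Sum>i\<le>degree A. if int i mod n = y then coeff A i else 0)"

definition cyclic_modulus :: "int \<Rightarrow> 'a::comm_ring_1 poly" where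
  "cyclic_modulus n = monom 1 (nat n) - 1"

lemma cyclic_coeff_upto:
  assumes "degree A \<le> D"
  shows "cyclic_coeff n A y = (\<Sum>i\<le>D. if int i mod n = y then coeff A i else 0)"
  unfolding cyclic_coeff_def
  by (rule sum.mono_neutral_left) (use assms in \<open>auto simp: coeff_eq_0\<close>)

lemma cyclic_coeff_add: "cyclic_coeff n (A + B) y = cyclic_coeff n A y + cyclic_coeff n B y"
proof -
  have "degree (A + B) \<le> max (degree A) (degree B)"
    by (rule degree_add_le) auto
  then show ?thesis
    by (simp add: cyclic_coeff_upto[of _ "max (degree A) (degree B)"] sum.distrib[symmetric])
      (rule sum.cong; auto)
qed

lemma cyclic_coeff_smult: "cyclic_coeff n (smult c A) y = c * cyclic_coeff n A y"
  using degree_smult_le[of c A]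
  by (simp add: cyclic_coeff_upto[of _ "degree A"] sum_distrib_left) (rule sum.cong; auto)

lemma cyclic_coeff_diff: "cyclic_coeff n (A - B) y = cyclic_coeff n A y - cyclic_coeff n B y"
  using cyclic_coeff_add[of n A "smult (-1) B" y] cyclic_coeff_smult[of n "-1" B y] by simp

lemma cyclic_coeff_0 [simp]: "cyclic_coeff n 0 y = 0"
  unfolding cyclic_coeff_def by (simp only: coeff_0 if_cancel sum.neutral_const)

lemma cyclic_coeff_sum:
  "finite I \<Longrightarrow> cyclic_coeff n (\<Sum>i\<in>I. f i) y = (\<Sum>i\<in>I. cyclic_coeff n (f i) y)"
  by (induction I rule: finite_induct) (auto simp: cyclic_coeff_add)

lemma cyclic_coeff_monom:
  "cyclic_coeff n (monom c i) y = (if int i mod n = y then c else 0)"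
proof -
  have "cyclic_coeff n (monom c i) y =
      (\<Sum>j\<le>i. if int j mod n = y then coeff (monom c i) j else 0)"
    by (rule cyclic_coeff_upto) (simp add: degree_monom_le)
  also have "\<dots> = (\<Sum>j\<in>{i}. if int j mod n = y then coeff (monom c i) j else 0)"
    by (rule sum.mono_neutral_right) (auto simp: coeff_monom)
  finally show ?thesis by (simp add: coeff_monom)
qed

lemma cyclic_coeff_const: "cyclic_coeff n [:c:] y = (if 0 mod n = y then c else 0)"
  using cyclic_coeff_monom[of n c 0 y] by (simp add: monom_0)

lemma cyclic_coeff_monom_n_mult:
  assumes "n > 0"
  shows "cyclic_coeff n (monom 1 (nat n) * A) y = cyclic_coeff n A y"
proof -
  let ?f = "\<lambda>i. if int i mod n = y then coeff (monom 1 (nat n) * A) i else 0"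
  have "degree (monom 1 (nat n) * A) \<le> degree A + nat n"
    by (metis add.commute degree_monom_le degree_mult_le dual_order.trans add_le_mono1)
  then have "cyclic_coeff n (monom 1 (nat n) * A) y = (\<Sum>i\<le>degree A + nat n. ?f i)"
    by (rule cyclic_coeff_upto)
  also have "\<dots> = (\<Sum>i\<in>{nat n..degree A + nat n}. ?f i)"
    by (rule sum.mono_neutral_right) (auto simp: coeff_monom_mult)
  also have "\<dots> = (\<Sum>i\<in>{0..degree A}. ?f (i + nat n))"
    using sum.shift_bounds_cl_nat_ivl[of ?f 0 "nat n" "degree A"] by simp
  also have "\<dots> = cyclic_coeff n A y"
    using assms unfolding cyclic_coeff_def atLeast0AtMost
    by (intro sum.cong) (simp_all add: coeff_monom_mult)
  finally show ?thesis .
qed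

lemma cyclic_coeff_modulus_mult:
  "n > 0 \<Longrightarrow> cyclic_coeff n (cyclic_modulus n * A) y = 0"
  by (simp add: cyclic_modulus_def left_diff_distrib cyclic_coeff_diff cyclic_coeff_monom_n_mult)

lemma cyclic_modulus_dvd_monom_diff:
  assumes "n > 0"
  shows "cyclic_modulus n dvd monom c i - monom c (i mod nat n)"
proof -
  let ?X = "monom 1 (nat n)"
  have "monom c i - monom c (i mod nat n) = monom c (i mod nat n) * (?X ^ (i div nat n) - 1)"
    by (simp add: monom_power mult_monom right_diff_distrib mult.commute)
  moreover have "cyclic_modulus n dvd ?X ^ (i div nat n) - 1"
    unfolding cyclic_modulus_def power_diff_1_eq by simp
  ultimately show ?thesis by (metis dvd_mult)
qed

lemma cyclic_modulus_dvd_reduction: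
  assumes "n > 0"
  shows "cyclic_modulus n dvd A - (\<Sum>y<nat n. monom (cyclic_coeff n A (int y)) y)"
proof -
  let ?c = "\<lambda>i y. if i mod nat n = y then coeff A i else 0"
  have int_mod: "int i mod n = int y \<longleftrightarrow> i mod nat n = y" for i y
    using assms by (metis int_eq_iff_numeral zmod_int int_nat_eq less_le of_nat_eq_iff)
  have "(\<Sum>y<nat n. monom (cyclic_coeff n A (int y)) y) = (\<Sum>y<nat n. \<Sum>i\<le>degree A. monom (?c i y) y)"
    by (simp add: cyclic_coeff_def monom_sum int_mod)
  also have "\<dots> = (\<Sum>i\<le>degree A. \<Sum>y<nat n. monom (?c i y) y)"
    by (rule sum.swap)
  also have "\<dots> = (\<Sum>i\<le>degree A. monom (coeff A i) (i mod nat n))"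
  proof (rule sum.cong)
    fix i
    have "(\<Sum>y<nat n. monom (?c i y) y) = (\<Sum>y\<in>{i mod nat n}. monom (?c i y) y)"
      using assms by (intro sum.mono_neutral_right) auto
    then show "(\<Sum>y<nat n. monom (?c i y) y) = monom (coeff A i) (i mod nat n)"
      by simp
  qed simp
  finally have "A - (\<Sum>y<nat n. monom (cyclic_coeff n A (int y)) y) =
      (\<Sum>i\<le>degree A. monom (coeff A i) i - monom (coeff A i) (i mod nat n))"
    by (simp add: poly_as_sum_of_monoms sum_subtractf)
  then show ?thesis
    by (simp add: dvd_sum cyclic_modulus_dvd_monom_diff[OF assms])
qed

lemma cyclic_modulus_dvd_if_cyclic_coeff_eq:
  assumes "n > 0" and "\<And>y. 0 \<le> y \<Longrightarrow> y < n \<Longrightarrow> cyclic_coeff n A y = cyclic_coeff n B y"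
  shows "cyclic_modulus n dvd A - B"
proof -
  have "(\<Sum>y<nat n. monom (cyclic_coeff n (A - B) (int y)) y) = 0"
    using assms by (intro sum.neutral) (auto simp: cyclic_coeff_diff)
  then show ?thesis
    using cyclic_modulus_dvd_reduction[OF assms(1), of "A - B"] by simp
qed

section \<open>Frobenius congruences\<close>

lemma prime_dvd_power_add_diff:
  fixes a b :: "'a::comm_ring_1"
  assumes "prime p"
  shows "of_nat p dvd (a + b) ^ p - (a ^ p + b ^ p)"
proof -
  let ?t = "\<lambda>k. of_nat (p choose k) * a ^ k * b ^ (p - k)"
  have "p > 0" using assms by (simp add: prime_gt_0_nat)
  then have "{..p} = insert 0 (insert p {1..<p})" by auto
  then have "(a + b) ^ p = a ^ p + b ^ p + (\<Sum>k\<in>{1..<p}. ?t k)"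
    using \<open>p > 0\<close> by (simp add: binomial_ring add_ac)
  moreover have "of_nat p dvd (\<Sum>k\<in>{1..<p}. ?t k)"
  proof (rule dvd_sum)
    fix k assume "k \<in> {1..<p}"
    then have "p dvd p choose k"
      using assms by (intro dvd_choose_prime) auto
    then obtain c where "p choose k = p * c" ..
    then show "of_nat p dvd ?t k" by (simp add: mult.assoc)
  qed
  ultimately show ?thesis by simp
qed

lemma prime_dvd_power_diff_self:
  fixes r :: int
  assumes "prime p"
  shows "int p dvd r ^ p - r"
proof (induction r rule: int_induct[where k = 0])
  case base
  then show ?case using prime_gt_0_nat[OF assms] by (simp add: zero_power)
next
  case (step1 r)
  have "(r + 1) ^ p - (r + 1) = ((r + 1) ^ p - (r ^ p + 1 ^ p)) + (r ^ p - r)" by simp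
  then show ?case
    using step1 prime_dvd_power_add_diff[OF assms, of r 1] by (metis dvd_add of_nat_id)
next
  case (step2 r)
  have "(r - 1) ^ p - (r - 1) = (r ^ p - r) - ((r - 1 + 1) ^ p - ((r - 1) ^ p + 1 ^ p))" by simp
  then show ?case
    using step2 prime_dvd_power_add_diff[OF assms, of "r - 1" 1] by (metis dvd_diff of_nat_id)
qed

lemma prime_dvd_sum_monom_power_diff:
  assumes "prime p" and "finite D"
  shows "of_nat p dvd (\<Sum>d\<in>D. monom (1::'a::comm_ring_1) d) ^ p - (\<Sum>d\<in>D. monom 1 (p * d))"
  using assms(2)
proof (induction D rule: finite_induct)
  case empty
  then show ?case using prime_gt_0_nat[OF assms(1)] by (simp add: zero_power)
next
  case (insert d D)
  let ?s = "\<Sum>d\<in>D. monom (1::'a) d"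
  have "(\<Sum>d\<in>insert d D. monom (1::'a) d) ^ p - (\<Sum>d\<in>insert d D. monom 1 (p * d)) =
      ((monom 1 d + ?s) ^ p - ((monom 1 d) ^ p + ?s ^ p)) + (?s ^ p - (\<Sum>d\<in>D. monom 1 (p * d)))"
    using insert.hyps by (simp add: monom_power mult.commute)
  then show ?case
    using insert.IH prime_dvd_power_add_diff[OF assms(1), of "monom 1 d" ?s] by (metis dvd_add)
qed

text \<open>\<open>X\<^sup>j \<equiv> fst (quad_rem a b j) * X + snd (quad_rem a b j)\<close> modulo \<open>X\<^sup>2 - a X - b\<close>.\<close>

fun quad_rem :: "int \<Rightarrow> int \<Rightarrow> nat \<Rightarrow> int \<times> int" where
  "quad_rem a b 0 = (0, 1)"
| "quad_rem a b (Suc j) =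
     (a * fst (quad_rem a b j) + snd (quad_rem a b j), b * fst (quad_rem a b j))"

lemma quad_rem_root:
  assumes "r\<^sup>2 = a * r + b"
  shows "r ^ j = fst (quad_rem a b j) * r + snd (quad_rem a b j)"
proof (induction j)
  case (Suc j)
  have "r ^ Suc j = fst (quad_rem a b j) * r\<^sup>2 + snd (quad_rem a b j) * r"
    using Suc by (simp add: algebra_simps power2_eq_square)
  then show ?case
    using assms by (simp add: algebra_simps)
qed simp

lemma quad_rem_prime_simple_root:
  assumes q: "prime q" and r: "r\<^sup>2 = a * r + b" and "\<not> int q dvd 2 * r - a"
  shows "int q dvd fst (quad_rem a b q) - 1" and "int q dvd snd (quad_rem a b q)"
proof -
  let ?s = "a - r" and ?U = "fst (quad_rem a b q)" and ?V = "snd (quad_rem a b q)"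
  have s: "?s\<^sup>2 = a * ?s + b"
    using r by (simp add: algebra_simps power2_eq_square)
  have "(?U - 1) * (2 * r - a) = (r ^ q - r) - (?s ^ q - ?s)"
    using quad_rem_root[OF r, of q] quad_rem_root[OF s, of q] by (simp add: algebra_simps)
  then have "int q dvd (?U - 1) * (2 * r - a)"
    using prime_dvd_power_diff_self[OF q] by (metis dvd_diff)
  then show U: "int q dvd ?U - 1"
    using assms(3) q by (simp add: prime_dvd_mult_iff)
  have "?V = (r ^ q - r) - (?U - 1) * r"
    using quad_rem_root[OF r, of q] by (simp add: algebra_simps)
  then show "int q dvd ?V"
    using prime_dvd_power_diff_self[OF q, of r] U by simp
qed

lemma quad_rem_prime_double_root:
  assumes q: "prime q" and r: "r\<^sup>2 = a * r + b" and d: "int q dvd 2 * r - a"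
  shows "int q dvd fst (quad_rem a b q)"
proof -
  \<comment> \<open>modulo \<open>q\<close> the quadratic is \<open>(X - r)\<^sup>2\<close>, so \<open>X\<^sup>j\<^sup>+\<^sup>1 \<equiv> (j + 1) r\<^sup>j X - j r\<^sup>j\<^sup>+\<^sup>1\<close>\<close>
  have b: "b = r\<^sup>2 - a * r" using r by simp
  have "int q dvd fst (quad_rem a b (Suc j)) - int (Suc j) * r ^ j \<and>
        int q dvd snd (quad_rem a b (Suc j)) + int j * r ^ Suc j" for j
  proof (induction j)
    case (Suc j)
    define e1 where "e1 = fst (quad_rem a b (Suc j)) - int (Suc j) * r ^ j"
    define e2 where "e2 = snd (quad_rem a b (Suc j)) + int j * r ^ Suc j"
    have "fst (quad_rem a b (Suc (Suc j))) - int (Suc (Suc j)) * r ^ Suc j =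
        a * e1 + e2 + (a - 2 * r) * (int (Suc j) * r ^ j)"
      unfolding e1_def e2_def by (simp add: algebra_simps)
    moreover have "snd (quad_rem a b (Suc (Suc j))) + int (Suc j) * r ^ Suc (Suc j) =
        b * e1 + (r * (2 * r - a)) * (int (Suc j) * r ^ j)"
      unfolding e1_def b by (simp add: algebra_simps power2_eq_square)
    moreover have "int q dvd e1" "int q dvd e2" "int q dvd a - 2 * r"
      using Suc d unfolding e1_def e2_def by (auto simp: dvd_diff_commute)
    ultimately show ?case using d by simp
  qed simp
  from this[of "q - 1"] have "int q dvd fst (quad_rem a b q) - int q * r ^ (q - 1)"
    using q prime_gt_0_nat by (metis Suc_diff_1)
  then show ?thesis by (metis dvd_add dvd_triv_left diff_add_cancel)
qed

lemma add_mod_eq_iff: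
  fixes d e n y :: int
  assumes "0 \<le> e" "e < n" "0 \<le> y" "y < n"
  shows "(d + e) mod n = y \<longleftrightarrow> e = (y - d) mod n"
proof -
  have "(d + e) mod n = y mod n \<longleftrightarrow> e mod n = (y - d) mod n"
    by (simp add: mod_eq_dvd_iff algebra_simps)
  then show ?thesis
    using assms by simp
qed

lemma mult_mod_eq_imp_eq:
  fixes c d e n :: int
  assumes "coprime c n" and "(c * e) mod n = (c * d) mod n"
    and "0 \<le> e" "e < n" "0 \<le> d" "d < n"
  shows "e = d"
proof -
  have "n dvd c * (e - d)"
    using assms(2) by (simp add: mod_eq_dvd_iff right_diff_distrib)
  then have "e mod n = d mod n"
    using assms(1) by (simp add: coprime_dvd_mult_right_iff mod_eq_dvd_iff coprime_commute)
  then show ?thesis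
    using assms(3-6) by simp
qed

lemma dvd_nat_abs_mult_if_dvd:
  "int q dvd a \<Longrightarrow> q dvd nat \<bar>a * b\<bar>"
  by (metis abs_ge_zero dvd_abs_iff dvd_mult2 int_dvd_int_iff int_nat_eq)

lemma mult_mod_eq_imp_mem_coset:
  fixes n m e d :: int
  assumes "n = int p * m" and "m > 0" and "0 \<le> e" "e < n"
    and "(int p * e) mod n = (int p * d) mod n"
  shows "e \<in> (\<lambda>j. (d + int j * m) mod n) ` {..<p}"
proof -
  have "p > 0"
    using assms(1-4) by (cases p) auto
  have "n dvd int p * (e - d)"
    using assms(5) by (simp add: mod_eq_dvd_iff right_diff_distrib)
  then have "m dvd e - d"
    using assms(1) \<open>p > 0\<close> by simp
  then obtain l where l: "e - d = m * l" ..
  have "e - (d + m * (l mod int p)) = n * (l div int p)"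
    using l assms(1) by (simp add: algebra_simps minus_mod_eq_mult_div[symmetric])
  then have "e mod n = (d + m * (l mod int p)) mod n"
    by (simp add: mod_eq_dvd_iff)
  then have "e = (d + int (nat (l mod int p)) * m) mod n"
    using assms(3,4) \<open>p > 0\<close> by (simp add: mult.commute)
  moreover have "nat (l mod int p) < p"
    using \<open>p > 0\<close> by (simp add: nat_less_iff)
  ultimately show ?thesis by blast
qed

lemma dvd_cofactor_imp_multiple:
  fixes n m y :: int
  assumes "n = int p * m" and "0 < y" and "y < n" and "m dvd y"
  shows "\<exists>j. 1 \<le> j \<and> j < int p \<and> y = j * m"
proof -
  obtain j where j: "y = m * j"
    using assms(4) by (auto elim: dvdE)
  have "m > 0"
    using assms(1-3) by (smt (verit) mult_nonneg_nonpos of_nat_0_le_iff)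
  then have "0 < j" "j < int p"
    using j assms(1-3) by (auto simp: zero_less_mult_iff mult.commute mult_less_cancel_left)
  then show ?thesis
    using j by (intro exI[of _ j]) (simp add: mult.commute)
qed

lemma exists_coprime_cong:
  fixes a b N :: nat
  assumes "b > 0" and "coprime a b" and "N > 0"
  obtains x where "x > 0" and "[x = a] (mod b)" and "coprime x N"
proof
  define Q where "Q = {q \<in> prime_factors N. \<not> q dvd a}"
  define x where "x = a + b * \<Prod>Q"
  have Q_prime: "prime q" if "q \<in> Q" for q
    using that by (auto simp: Q_def)
  have fin: "finite Q" by (simp add: Q_def)
  have "\<Prod>Q > 0"
    using Q_prime by (simp add: fin prime_gt_0_nat prod_pos)
  then show "x > 0" using assms(1) by (simp add: x_def)
  show "[x = a] (mod b)" by (simp add: x_def cong_def)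
  show "coprime x N"
  proof (rule ccontr)
    assume "\<not> coprime x N"
    then obtain q where q: "prime q" "q dvd x" "q dvd N"
      by (metis coprime_iff_gcd_eq_1 dvd_gcdD1 dvd_gcdD2 prime_factor_nat)
    show False
    proof (cases "q dvd a")
      case True
      then have "\<not> q dvd b"
        using assms(2) q(1) by (metis coprime_common_divisor not_prime_unit)
      moreover have "\<not> q dvd \<Prod>Q"
        using True q(1) by (auto simp: prime_dvd_prod_iff fin Q_def dest: Q_prime primes_dvd_imp_eq)
      ultimately have "\<not> q dvd b * \<Prod>Q" using q(1) by (simp add: prime_dvd_mult_iff)
      then show False using q(2) True by (simp add: x_def dvd_add_right_iff)
    next
      case False
      then have "q \<in> Q" using q assms(3) by (simp add: Q_def in_prime_factors_iff)
      then have "q dvd b * \<Prod>Q" by (simp add: fin dvd_prod_eqI)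
      then show False using q(2) False by (simp add: x_def dvd_add_left_iff)
    qed
  qed
qed

lemma mult_mod_closed_if_prime_mult_mod_closed:
  fixes n :: int and N x :: nat
  assumes S: "S \<subseteq> {0..<n}"
    and prime_closed: "\<And>q d. prime q \<Longrightarrow> \<not> q dvd N \<Longrightarrow> d \<in> S \<Longrightarrow> (int q * d) mod n \<in> S"
    and "x > 0" and "coprime x N" and "d \<in> S"
  shows "(int x * d) mod n \<in> S"
  using assms(3-5)
proof (induction x arbitrary: d rule: prime_divisors_induct)
  case (unit x)
  then show ?case using S by auto
next
  case (factor q x)
  then have "\<not> q dvd N" and "(int x * d) mod n \<in> S"
    by (auto simp: prime_gt_0_nat dest: coprime_common_divisor not_prime_unit)
  then have "(int q * ((int x * d) mod n)) mod n \<in> S"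
    using prime_closed factor.hyps by blast
  then show ?case by (simp add: mod_mult_right_eq mult.assoc)
qed simp

section \<open>Regular cliques force an integral eigenvalue\<close>

lemma sum_card_nbrs_Int_swap:
  assumes "simple_graph V E" and "x \<in> V" and "C \<subseteq> V"
  shows "(\<Sum>y\<in>nbrs V E x. card (nbrs V E y \<inter> C)) = (\<Sum>z\<in>C. card (nbrs V E x \<inter> nbrs V E z))"
proof -
  have fin: "finite (nbrs V E x)" "finite C"
    using assms finite_subset unfolding simple_graph_def nbrs_def by auto
  have "(\<Sum>y\<in>nbrs V E x. card (nbrs V E y \<inter> C)) = (\<Sum>y\<in>nbrs V E x. \<Sum>z\<in>C. of_bool (E y z))"
    using assms(3) fin(2)
    by (intro sum.cong) (auto simp: nbrs_def Int_def sum.If_cases intro!: arg_cong[where f = card])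
  also have "\<dots> = (\<Sum>z\<in>C. \<Sum>y\<in>nbrs V E x. of_bool (E y z))"
    by (rule sum.swap)
  also have "\<dots> = (\<Sum>z\<in>C. card (nbrs V E x \<inter> nbrs V E z))"
    using assms fin(1) unfolding simple_graph_def
    by (intro sum.cong) (auto simp: nbrs_def Int_def sum.If_cases subset_iff intro!: arg_cong[where f = card])
  finally show ?thesis .
qed

locale srg =
  fixes V :: "'a set" and E :: "'a \<Rightarrow> 'a \<Rightarrow> bool" and v k lam mu :: nat
  assumes srg: "strongly_regular V E v k lam mu"
begin

lemma simple: "simple_graph V E"
  using srg by (simp add: strongly_regular_def)

lemma finite_nbrs: "finite (nbrs V E x)"
  using simple by (simp add: simple_graph_def nbrs_def)

lemma nbrs_subset: "nbrs V E x \<subseteq> V"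
  by (auto simp: nbrs_def)

lemma card_nbrs: "x \<in> V \<Longrightarrow> card (nbrs V E x) = k"
  using srg by (simp add: strongly_regular_def edge_regular_def regular_graph_def)

lemma card_common_nbrs:
  assumes "x \<in> V" and "y \<in> V"
  shows "card (nbrs V E x \<inter> nbrs V E y) = (if x = y then k else if E x y then lam else mu)"
proof -
  have "\<forall>x\<in>V. \<forall>y\<in>V. E x y \<longrightarrow> card (nbrs V E x \<inter> nbrs V E y) = lam"
    and "\<forall>x\<in>V. \<forall>y\<in>V. x \<noteq> y \<and> \<not> E x y \<longrightarrow> card (nbrs V E x \<inter> nbrs V E y) = mu"
    using srg by (simp_all add: strongly_regular_def edge_regular_def)
  then show ?thesis
    using assms card_nbrs by auto
qed

context
  fixes C :: "'a set" and a :: nat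
  assumes clique: "regular_clique V E C a"
begin

lemma clique_subset: "C \<subseteq> V"
  using clique by (simp add: regular_clique_def is_clique_def)

lemma finite_clique: "finite C"
  using simple clique_subset by (meson finite_subset simple_graph_def)

lemma nbrs_Int_clique: "y \<in> C \<Longrightarrow> nbrs V E y \<inter> C = C - {y}"
  using clique simple clique_subset
  by (auto simp: regular_clique_def is_clique_def simple_graph_def nbrs_def)

lemma sum_card_nbrs_Int_clique:
  assumes "x \<in> V"
  defines "s \<equiv> card (nbrs V E x \<inter> C)"
  shows "int (\<Sum>y\<in>nbrs V E x. card (nbrs V E y \<inter> C)) =
    (int (card C) - 1) * int s + int a * (int k - int s)"
proof -
  let ?N = "nbrs V E x"
  have "(\<Sum>y\<in>?N. card (nbrs V E y \<inter> C)) =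
      (\<Sum>y\<in>?N \<inter> C. card (nbrs V E y \<inter> C)) + (\<Sum>y\<in>?N - C. card (nbrs V E y \<inter> C))"
    by (rule sum.Int_Diff[OF finite_nbrs])
  also have "\<dots> = (\<Sum>y\<in>?N \<inter> C. card C - 1) + (\<Sum>y\<in>?N - C. a)"
    using clique finite_clique nbrs_Int_clique
    by (intro arg_cong2[where f = "(+)"] sum.cong) (auto simp: regular_clique_def nbrs_def)
  finally have sum_eq: "(\<Sum>y\<in>?N. card (nbrs V E y \<inter> C)) = s * (card C - 1) + card (?N - C) * a"
    by (simp add: s_def)
  have "s \<le> k"
    using card_mono[of ?N "?N \<inter> C"] finite_nbrs card_nbrs[OF assms(1)] by (auto simp: s_def)
  then have outside: "int (card (?N - C)) = int k - int s"
    using card_Diff_subset_Int[of ?N C] finite_nbrs card_nbrs[OF assms(1)] by (simp add: s_def)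
  have "card C \<ge> 1"
    using clique finite_clique by (auto simp: regular_clique_def is_clique_def Suc_le_eq card_gt_0_iff)
  then have "int (card C - 1) = int (card C) - 1" by simp
  then show ?thesis
    unfolding sum_eq of_nat_add of_nat_mult outside by (simp add: algebra_simps)
qed

lemma sum_card_common_nbrs_clique_member:
  assumes "x \<in> C"
  shows "(\<Sum>z\<in>C. card (nbrs V E x \<inter> nbrs V E z)) = k + (card C - 1) * lam"
proof -
  have "(\<Sum>z\<in>C. card (nbrs V E x \<inter> nbrs V E z)) =
      card (nbrs V E x \<inter> nbrs V E x) + (\<Sum>z\<in>C - {x}. card (nbrs V E x \<inter> nbrs V E z))"
    by (rule sum.remove[OF finite_clique assms])
  also have "(\<Sum>z\<in>C - {x}. card (nbrs V E x \<inter> nbrs V E z)) = (\<Sum>z\<in>C - {x}. lam)"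
    using clique clique_subset assms card_common_nbrs[of x]
    by (intro sum.cong) (auto simp: regular_clique_def is_clique_def subset_iff)
  finally show ?thesis
    using assms clique_subset finite_clique card_nbrs by auto
qed

lemma sum_card_common_nbrs_clique_outsider:
  assumes "x \<in> V - C"
  shows "(\<Sum>z\<in>C. card (nbrs V E x \<inter> nbrs V E z)) = a * lam + (card C - a) * mu"
proof -
  let ?A = "nbrs V E x \<inter> C"
  have "(\<Sum>z\<in>C. card (nbrs V E x \<inter> nbrs V E z)) =
      (\<Sum>z\<in>?A. card (nbrs V E x \<inter> nbrs V E z)) + (\<Sum>z\<in>C - ?A. card (nbrs V E x \<inter> nbrs V E z))"
    using sum.subset_diff[of ?A C] finite_clique by (simp add: add.commute)
  also have "\<dots> = (\<Sum>z\<in>?A. lam) + (\<Sum>z\<in>C - ?A. mu)"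
    using assms clique_subset card_common_nbrs[of x]
    by (intro arg_cong2[where f = "(+)"] sum.cong) (auto simp: nbrs_def)
  moreover have "card ?A = a"
    using clique assms by (simp add: regular_clique_def)
  ultimately show ?thesis
    using card_Diff_subset[of ?A C] finite_clique by simp
qed

text \<open>
  Counting the pairs \<open>(y, z)\<close> with \<open>y\<close> adjacent to \<open>x\<close> and \<open>z \<in> C\<close> adjacent to \<open>y\<close> in two
  ways, once for some \<open>x \<in> C\<close> and once for some \<open>x \<notin> C\<close>, gives two linear relations between
  the parameters whose difference is the quadratic relation below.
\<close>

lemma regular_clique_eigenvalue:
  defines "\<theta> \<equiv> int (card C) - 1 - int a"
  shows "\<theta>\<^sup>2 = (int lam - int mu) * \<theta> + (int k - int mu)"
proof -
  obtain x0 where x0: "x0 \<in> C"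
    using clique by (auto simp: regular_clique_def is_clique_def)
  have "\<not> C = V"
    using clique srg by (auto simp: regular_clique_def is_clique_def strongly_regular_def complete_graph_def)
  then obtain x1 where x1: "x1 \<in> V - C"
    using clique_subset by auto
  have c: "card C \<ge> 1" "card (nbrs V E x0 \<inter> C) = card C - 1"
    using x0 finite_clique nbrs_Int_clique[OF x0] by (auto simp: Suc_le_eq card_gt_0_iff)
  have "a \<le> card C"
    using clique x1 card_mono[OF finite_clique, of "nbrs V E x1 \<inter> C"] by (auto simp: regular_clique_def)
  have in_C: "(int (card C) - 1) * (int (card C) - 1) + int a * (int k - (int (card C) - 1)) =
      int k + (int (card C) - 1) * int lam"
    using sum_card_nbrs_Int_clique[of x0] sum_card_common_nbrs_clique_member[OF x0] c x0 clique_subset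
      sum_card_nbrs_Int_swap[OF simple _ clique_subset, of x0]
    by (auto simp: of_nat_diff)
  have out_C: "(int (card C) - 1) * int a + int a * (int k - int a) =
      int a * int lam + (int (card C) - int a) * int mu"
    using sum_card_nbrs_Int_clique[of x1] sum_card_common_nbrs_clique_outsider[OF x1] x1 clique
      sum_card_nbrs_Int_swap[OF simple _ clique_subset, of x1] \<open>a \<le> card C\<close>
    by (auto simp: of_nat_diff regular_clique_def)
  show ?thesis
    using in_C out_C unfolding \<theta>_def by (simp add: power2_eq_square algebra_simps)
qed

end

end

section \<open>Circulant strongly regular graphs as partial difference sets\<close>

lemma graph_iso_nbrs:
  assumes "bij_betw f V W" and "\<forall>x\<in>V. \<forall>y\<in>V. E x y \<longleftrightarrow> F (f x) (f y)" and "x \<in> V"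
  shows "nbrs W F (f x) = f ` nbrs V E x"
  using assms by (auto simp: nbrs_def bij_betw_def)

lemma (in srg) card_common_nbrs_iso:
  assumes "graph_iso V E W F" and "u \<in> W" and "w \<in> W"
  shows "card (nbrs W F u \<inter> nbrs W F w) = (if u = w then k else if F u w then lam else mu)"
proof -
  obtain f where f: "bij_betw f V W" and fE: "\<forall>x\<in>V. \<forall>y\<in>V. E x y \<longleftrightarrow> F (f x) (f y)"
    using assms(1) by (auto simp: graph_iso_def)
  then have inj: "inj_on f V"
    by (simp add: bij_betw_def)
  obtain x y where xy: "x \<in> V" "y \<in> V" "u = f x" "w = f y"
    using f assms(2,3) by (auto simp: bij_betw_def)
  have "nbrs W F u \<inter> nbrs W F w = f ` (nbrs V E x \<inter> nbrs V E y)"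
    using xy graph_iso_nbrs[OF f fE] inj_on_image_Int[OF inj nbrs_subset nbrs_subset] by simp
  then have "card (nbrs W F u \<inter> nbrs W F w) = card (nbrs V E x \<inter> nbrs V E y)"
    using card_image inj_on_subset[OF inj] nbrs_subset by (metis inf.coboundedI1)
  moreover have "u = w \<longleftrightarrow> x = y" and "F u w \<longleftrightarrow> E x y"
    using xy inj fE by (auto simp: inj_on_def)
  ultimately show ?thesis
    using card_common_nbrs[OF xy(1,2)] by simp
qed

lemma (in srg) graph_iso_not_complete:
  assumes "graph_iso V E W F"
  shows "\<not> complete_graph W F"
proof
  assume complete: "complete_graph W F"
  obtain f where f: "bij_betw f V W" and fE: "\<forall>x\<in>V. \<forall>y\<in>V. E x y \<longleftrightarrow> F (f x) (f y)"
    using assms by (auto simp: graph_iso_def)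
  obtain x y where "x \<in> V" "y \<in> V" "x \<noteq> y" "\<not> E x y"
    using srg by (auto simp: strongly_regular_def complete_graph_def)
  moreover have "f x \<noteq> f y"
    using f \<open>x \<in> V\<close> \<open>y \<in> V\<close> \<open>x \<noteq> y\<close> by (auto simp: bij_betw_def inj_on_def)
  ultimately show False
    using complete f fE by (auto simp: complete_graph_def bij_betw_def)
qed

lemma circulant_conn_neg_mod_iff:
  assumes "circulant_conn n S" and "0 \<le> z" and "z < n"
  shows "(- z) mod n \<in> S \<longleftrightarrow> z \<in> S"
proof
  assume "(- z) mod n \<in> S"
  then have "(- ((- z) mod n)) mod n \<in> S"
    using assms(1) by (simp add: circulant_conn_def)
  then show "z \<in> S"
    using assms(2,3) by (simp add: mod_minus_eq)
qed (use assms in \<open>simp add: circulant_conn_def\<close>)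

locale cyclic_pds =
  fixes n :: int and S :: "int set" and k lam mu :: nat
  assumes conn: "circulant_conn n S"
    and card_diffs: "\<And>y. 0 \<le> y \<Longrightarrow> y < n \<Longrightarrow>
      card {z \<in> S. (y - z) mod n \<in> S} = (if y = 0 then k else if y \<in> S then lam else mu)"

lemma (in srg) circulant_cyclic_pds:
  assumes conn: "circulant_conn n S" and iso: "graph_iso V E {0..<n} (circ_adj n S)"
  shows "cyclic_pds n S k lam mu"
proof
  fix y :: int
  assume y: "0 \<le> y" "y < n"
  have "0 < n" using conn by (simp add: circulant_conn_def)
  have "nbrs {0..<n} (circ_adj n S) 0 \<inter> nbrs {0..<n} (circ_adj n S) y = {z \<in> S. (y - z) mod n \<in> S}"
    using conn circulant_conn_neg_mod_iff[OF conn]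
    by (auto simp: nbrs_def circ_adj_def circulant_conn_def)
  moreover have "circ_adj n S 0 y \<longleftrightarrow> y \<in> S"
    using circulant_conn_neg_mod_iff[OF conn y] by (simp add: circ_adj_def)
  ultimately show "card {z \<in> S. (y - z) mod n \<in> S} = (if y = 0 then k else if y \<in> S then lam else mu)"
    using card_common_nbrs_iso[OF iso, of 0 y] y \<open>0 < n\<close> by auto
qed (fact assms)

lemma (in srg) circulant_conn_proper:
  assumes conn: "circulant_conn n S" and iso: "graph_iso V E {0..<n} (circ_adj n S)"
  shows "S \<noteq> {1..<n}"
proof
  assume "S = {1..<n}"
  moreover obtain u w where "u \<in> {0..<n}" "w \<in> {0..<n}" "u \<noteq> w" "(u - w) mod n \<notin> S"
    using graph_iso_not_complete[OF iso] by (auto simp: complete_graph_def circ_adj_def)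
  moreover have "(u - w) mod n \<noteq> 0"
    using calculation(2-4) by (auto simp: mod_eq_0_iff_dvd mod_eq_dvd_iff[symmetric])
  moreover have "0 < n"
    using conn by (simp add: circulant_conn_def)
  then have "0 \<le> (u - w) mod n" and "(u - w) mod n < n"
    by simp_all
  ultimately show False
    by auto
qed

context cyclic_pds
begin

abbreviation "alpha \<equiv> int lam - int mu"
abbreviation "beta \<equiv> int k - int mu"

lemma n_pos: "0 < n"
  using conn by (simp add: circulant_conn_def)

lemma S_range: "s \<in> S \<Longrightarrow> 0 < s \<and> s < n"
  using conn by (auto simp: circulant_conn_def)

lemma finite_S: "finite S"
  using conn by (auto simp: circulant_conn_def intro: finite_subset)

lemma zero_notin_S: "0 \<notin> S"
  using S_range by blast

lemma neg_mod_in_S: "z \<in> S \<Longrightarrow> (- z) mod n \<in> S"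
  using conn by (simp add: circulant_conn_def)

lemma neg_mod_in_S_iff: "0 \<le> z \<Longrightarrow> z < n \<Longrightarrow> (- z) mod n \<in> S \<longleftrightarrow> z \<in> S"
  by (rule circulant_conn_neg_mod_iff[OF conn])

lemma diff_mod_in_S_commute: "(a - b) mod n \<in> S \<longleftrightarrow> (b - a) mod n \<in> S"
proof -
  have "(b - a) mod n = (- ((a - b) mod n)) mod n"
    by (simp add: mod_minus_eq)
  then show ?thesis
    using neg_mod_in_S_iff[of "(a - b) mod n"] n_pos by simp
qed

lemma card_S: "card S = k"
proof -
  have "{z \<in> S. (0 - z) mod n \<in> S} = S"
    using neg_mod_in_S_iff S_range by fastforce
  then show ?thesis
    using card_diffs[of 0] n_pos by simp
qed

lemma card_diffs_member: "z \<in> S \<Longrightarrow> card {w \<in> S. (z - w) mod n \<in> S} = lam"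
  using card_diffs[of z] S_range[of z] by auto

lemma card_non_diffs_member:
  assumes "z \<in> S"
  shows "card {w \<in> S. (z - w) mod n \<notin> S} = k - lam"
proof -
  have "{w \<in> S. (z - w) mod n \<notin> S} = S - {w \<in> S. (z - w) mod n \<in> S}"
    by auto
  then show ?thesis
    using card_Diff_subset[of "{w \<in> S. (z - w) mod n \<in> S}" S] finite_S card_S
      card_diffs_member[OF assms] by simp
qed

lemma reflect_reflect: "0 \<le> w \<Longrightarrow> w < n \<Longrightarrow> (c - (c - w) mod n) mod n = w"
  by (simp add: mod_diff_right_eq)

lemma inj_on_reflect: "A \<subseteq> {0..<n} \<Longrightarrow> inj_on (\<lambda>w. (c - w) mod n) A"
  by (rule inj_on_inverseI[where g = "\<lambda>w. (c - w) mod n"]) (auto simp: reflect_reflect)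

lemma mu_eq_k_if_diffs_closed:
  assumes "u \<in> {1..<n} - S" and "\<And>z. z \<in> S \<Longrightarrow> (u - z) mod n \<in> S"
  shows "mu = k"
proof -
  have "{z \<in> S. (u - z) mod n \<in> S} = S"
    using assms(2) by auto
  then show ?thesis
    using card_diffs[of u] assms(1) card_S by auto
qed

lemma mu_eq_k_if_add_closed:
  assumes "u \<in> {1..<n} - S" and "\<And>d. d \<in> S \<Longrightarrow> (d + u) mod n \<in> S"
  shows "mu = k"
proof (rule mu_eq_k_if_diffs_closed[OF assms(1)])
  fix z assume "z \<in> S"
  then have "((- z) mod n + u) mod n \<in> S"
    using assms(2) neg_mod_in_S by blast
  then show "(u - z) mod n \<in> S"
    by (simp add: mod_add_left_eq)
qed

lemma Suc_lam_less_k: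
  assumes "0 < mu" and "S \<noteq> {1..<n}"
  shows "lam + 1 < k"
proof -
  have "\<not> {1..<n} \<subseteq> S"
    using assms(2) conn by (auto simp: circulant_conn_def)
  then obtain t where t: "t \<in> {1..<n} - S"
    by blast
  then have "card {z \<in> S. (t - z) mod n \<in> S} = mu"
    using card_diffs[of t] by auto
  then have "{z \<in> S. (t - z) mod n \<in> S} \<noteq> {}"
    using assms(1) by (auto simp: card_gt_0_iff)
  then obtain z where z: "z \<in> S" "(t - z) mod n \<in> S" by auto
  let ?r = "\<lambda>w. (z - w) mod n"
  have "{w \<in> S. ?r w \<in> S} \<subseteq> ?r ` S - {0, t}"
  proof
    fix w assume w: "w \<in> {w \<in> S. ?r w \<in> S}"
    then have "w = ?r (?r w)"
      using reflect_reflect[of w z] S_range[of w] by force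
    then show "w \<in> ?r ` S - {0, t}"
      using w zero_notin_S t by blast
  qed
  moreover have "{0, t} \<subseteq> ?r ` S"
  proof -
    have "?r z = 0" and "?r ((z - t) mod n) = t"
      using reflect_reflect[of t z] t by auto
    moreover have "(z - t) mod n \<in> S"
      using z(2) diff_mod_in_S_commute by blast
    ultimately show ?thesis
      using z(1) by (metis empty_subsetI image_eqI insert_subset)
  qed
  moreover have "card (?r ` S) = k"
    using card_image[OF inj_on_reflect, of S z] S_range card_S by fastforce
  moreover have "card {0, t} = 2"
    using t by auto
  ultimately have "lam + 2 \<le> k"
    using card_mono[of "?r ` S - {0, t}" "{w \<in> S. ?r w \<in> S}"]
      card_Diff_subset[of "{0, t}" "?r ` S"] card_mono[of "?r ` S" "{0, t}"]
      card_diffs_member[OF z(1)] finite_S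
    by simp
  then show ?thesis by simp
qed

lemma k_le_Suc_lam_if_diffs_closed:
  assumes "u \<in> S" and "\<And>z. z \<in> S \<Longrightarrow> z \<noteq> u \<Longrightarrow> (u - z) mod n \<in> S"
  shows "k \<le> lam + 1"
proof -
  have sub: "S - {u} \<subseteq> {z \<in> S. (u - z) mod n \<in> S}"
    using assms(2) by blast
  have "card (S - {u}) \<le> lam"
    using card_mono[OF _ sub] card_diffs_member[OF assms(1)] finite_S by simp
  then show ?thesis
    using card_S finite_S assms(1) by simp
qed

lemma mult_mod_preimage_empty:
  assumes "p dvd n" and "\<not> p dvd y"
  shows "{e \<in> S. (p * e) mod n = y} = {}"
  using assms by (auto simp: dvd_mod_iff)

lemma diffs_closed_if_card_complement_le:
  assumes "card ({0..<n} - S) \<le> k - lam" and "z \<in> S" and "u \<in> {0..<n} - S"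
  shows "(z - u) mod n \<in> S"
proof -
  let ?r = "\<lambda>w. (z - w) mod n" and ?A = "{w \<in> S. (z - w) mod n \<notin> S}"
  have sub: "?r ` ?A \<subseteq> {0..<n} - S"
    using n_pos by auto
  have "card (?r ` ?A) = k - lam"
    using card_image[OF inj_on_reflect] card_non_diffs_member[OF assms(2)] S_range
    by (metis (no_types, lifting) atLeastLessThan_iff less_le mem_Collect_eq subsetI)
  moreover have "card (?r ` ?A) \<le> card ({0..<n} - S)"
    using sub by (intro card_mono) auto
  ultimately have "?r ` ?A = {0..<n} - S"
    using assms(1) sub by (intro card_subset_eq) auto
  then obtain w where "w \<in> ?A" "u = ?r w"
    using assms(3) by blast
  then show ?thesis
    using reflect_reflect[of w z] S_range[of w] by auto
qed

lemma mu_eq_0_if_multiples: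
  assumes "m dvd n" and "m > 1" and "\<And>s. s \<in> S \<Longrightarrow> m dvd s"
  shows "mu = 0"
proof -
  have "\<not> m dvd 1"
    using \<open>m > 1\<close> by (auto dest: zdvd_imp_le)
  moreover have "m \<le> n"
    using assms(1) n_pos by (simp add: zdvd_imp_le)
  ultimately have "1 < n"
    using assms(2) by simp
  have "1 \<notin> S"
    using assms(3)[of 1] \<open>\<not> m dvd 1\<close> by blast
  have empty: "{z \<in> S. (1 - z) mod n \<in> S} = {}"
  proof (rule ccontr)
    assume "{z \<in> S. (1 - z) mod n \<in> S} \<noteq> {}"
    then obtain z where "m dvd z" and "m dvd (1 - z) mod n"
      using assms(3) by blast
    then have "m dvd (1 - z) + z"
      using assms(1) by (intro dvd_add) (simp_all add: dvd_mod_iff)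
    then show False
      using \<open>\<not> m dvd 1\<close> by simp
  qed
  show ?thesis
    using card_diffs[of 1, unfolded empty] \<open>1 \<notin> S\<close> \<open>1 < n\<close> by simp
qed

lemma mu_eq_k_if_non_multiples_in_S:
  assumes "m dvd n" and "m > 1" and "S \<noteq> {1..<n}"
    and non_multiples: "\<And>y. 0 \<le> y \<Longrightarrow> y < n \<Longrightarrow> \<not> m dvd y \<Longrightarrow> y \<in> S"
  shows "mu = k"
proof -
  let ?K = "{0..<n} - S" and ?r = "\<lambda>u. (1 - u) mod n"
  have "\<not> m dvd 1"
    using \<open>m > 1\<close> by (auto dest: zdvd_imp_le)
  then have "1 \<in> S"
    using assms(1,2) n_pos non_multiples[of 1] by (auto dest: zdvd_imp_le)
  have "?r ` ?K \<subseteq> {w \<in> S. (1 - w) mod n \<notin> S}"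
  proof
    fix w assume "w \<in> ?r ` ?K"
    then obtain u where u: "u \<in> ?K" "w = ?r u"
      by blast
    then have "m dvd u"
      using non_multiples[of u] by auto
    then have "\<not> m dvd 1 - u"
      using \<open>\<not> m dvd 1\<close> dvd_add[of m "1 - u" u] by auto
    then have "w \<in> S"
      using non_multiples[of w] u(2) assms(1) n_pos by (simp add: dvd_mod_iff)
    moreover have "(1 - w) mod n = u"
      using u reflect_reflect by simp
    ultimately show "w \<in> {w \<in> S. (1 - w) mod n \<notin> S}"
      using u(1) by simp
  qed
  then have "card ?K \<le> card {w \<in> S. (1 - w) mod n \<notin> S}"
    by (intro card_inj_on_le[OF inj_on_reflect]) (auto simp: finite_S)
  also have "\<dots> = k - lam"
    by (rule card_non_diffs_member[OF \<open>1 \<in> S\<close>])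
  finally have "card ?K \<le> k - lam" .
  moreover have "\<not> {1..<n} \<subseteq> S"
    using assms(3) conn by (auto simp: circulant_conn_def)
  then obtain t where t: "t \<in> {1..<n} - S"
    by blast
  ultimately have "(z - t) mod n \<in> S" if "z \<in> S" for z
    using diffs_closed_if_card_complement_le[OF _ that, of t] by auto
  then show "mu = k"
    using mu_eq_k_if_diffs_closed[OF t] diff_mod_in_S_commute by blast
qed

definition conn_poly :: "int poly" where
  "conn_poly = (\<Sum>d\<in>S. monom 1 (nat d))"

definition ones_poly :: "int poly" where
  "ones_poly = (\<Sum>i<nat n. monom 1 i)"

lemma inj_on_nat_S: "inj_on nat S"
  using S_range by (intro inj_onI) (metis int_nat_eq less_le)

lemma cyclic_coeff_const_in_range:
  "0 \<le> y \<Longrightarrow> y < n \<Longrightarrow> cyclic_coeff n [:c:] y = c * of_bool (y = 0)"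
  using cyclic_coeff_const[of n c y] n_pos by auto

lemma cyclic_coeff_conn_poly:
  assumes "0 \<le> y" and "y < n"
  shows "cyclic_coeff n conn_poly y = of_bool (y \<in> S)"
proof -
  have "cyclic_coeff n conn_poly y = (\<Sum>d\<in>S. of_bool (d = y))"
    unfolding conn_poly_def cyclic_coeff_sum[OF finite_S] cyclic_coeff_monom
    by (intro sum.cong) (auto dest!: S_range)
  then show ?thesis
    using finite_S by (simp add: of_bool_def sum.delta')
qed

lemma cyclic_coeff_monom_mult_ones_poly:
  assumes "0 \<le> y" and "y < n"
  shows "cyclic_coeff n (monom 1 d * ones_poly) y = 1"
proof -
  have "{i \<in> {..<nat n}. (int d + int i) mod n = y} = {i \<in> {..<nat n}. int i = (y - int d) mod n}"
  proof (intro Collect_cong conj_cong refl)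
    fix i assume "i \<in> {..<nat n}"
    then show "(int d + int i) mod n = y \<longleftrightarrow> int i = (y - int d) mod n"
      using add_mod_eq_iff[OF _ _ assms, of "int i" "int d"] by simp
  qed
  also have "\<dots> = {nat ((y - int d) mod n)}"
    using n_pos by auto
  finally have "{i \<in> {..<nat n}. (int d + int i) mod n = y} = {nat ((y - int d) mod n)}" .
  then have "(\<Sum>i<nat n. if int (d + i) mod n = y then 1 else 0 :: int) = 1"
    by (simp add: sum.If_cases Int_def)
  then show ?thesis
    by (simp add: ones_poly_def sum_distrib_left mult_monom cyclic_coeff_sum cyclic_coeff_monom)
qed

lemma cyclic_coeff_ones_poly: "0 \<le> y \<Longrightarrow> y < n \<Longrightarrow> cyclic_coeff n ones_poly y = 1"
  using cyclic_coeff_monom_mult_ones_poly[of y 0] by simp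

lemma cyclic_coeff_conn_poly_square:
  assumes "0 \<le> y" and "y < n"
  shows "cyclic_coeff n (conn_poly * conn_poly) y = int (card {z \<in> S. (y - z) mod n \<in> S})"
proof -
  have inner: "(\<Sum>e\<in>S. of_bool ((d + e) mod n = y)) = (of_bool ((y - d) mod n \<in> S) :: int)"
    if "d \<in> S" for d
  proof -
    have "(d + e) mod n = y \<longleftrightarrow> e = (y - d) mod n" if "e \<in> S" for e
      using S_range[OF that] assms by (simp add: add_mod_eq_iff)
    then have "(\<Sum>e\<in>S. of_bool ((d + e) mod n = y)) = (\<Sum>e\<in>S. of_bool (e = (y - d) mod n) :: int)"
      by (intro sum.cong) auto
    then show ?thesis
      using finite_S by (simp add: of_bool_def sum.delta)
  qed
  have "conn_poly * conn_poly = (\<Sum>d\<in>S. \<Sum>e\<in>S. monom 1 (nat d + nat e))"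
    by (simp add: conn_poly_def sum_product mult_monom)
  moreover have "int (nat d + nat e) = d + e" if "d \<in> S" "e \<in> S" for d e
    using S_range[OF that(1)] S_range[OF that(2)] by simp
  ultimately have "cyclic_coeff n (conn_poly * conn_poly) y =
      (\<Sum>d\<in>S. \<Sum>e\<in>S. of_bool ((d + e) mod n = y))"
    by (simp add: cyclic_coeff_sum finite_S cyclic_coeff_monom of_bool_def)
  also have "\<dots> = (\<Sum>d\<in>S. of_bool ((y - d) mod n \<in> S))"
    using inner by simp
  finally show ?thesis
    using finite_S by (simp add: of_bool_def sum.If_cases Int_def)
qed

lemma modulus_dvd_conn_poly_square:
  "cyclic_modulus n dvd conn_poly * conn_poly - (smult alpha conn_poly + [:beta:] + smult (int mu) ones_poly)"
proof (rule cyclic_modulus_dvd_if_cyclic_coeff_eq[OF n_pos])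
  fix y assume y: "0 \<le> y" "y < n"
  show "cyclic_coeff n (conn_poly * conn_poly) y =
      cyclic_coeff n (smult alpha conn_poly + [:beta:] + smult (int mu) ones_poly) y"
    using zero_notin_S card_diffs[OF y]
    by (simp add: cyclic_coeff_add cyclic_coeff_smult cyclic_coeff_conn_poly_square[OF y]
        cyclic_coeff_conn_poly[OF y] cyclic_coeff_ones_poly[OF y] cyclic_coeff_const_in_range[OF y])
qed

lemma modulus_dvd_conn_poly_ones_poly:
  "cyclic_modulus n dvd conn_poly * ones_poly - smult (int k) ones_poly"
proof (rule cyclic_modulus_dvd_if_cyclic_coeff_eq[OF n_pos])
  fix y assume y: "0 \<le> y" "y < n"
  have "cyclic_coeff n (conn_poly * ones_poly) y = (\<Sum>d\<in>S. 1)"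
    by (simp add: conn_poly_def sum_distrib_right cyclic_coeff_sum[OF finite_S]
        cyclic_coeff_monom_mult_ones_poly[OF y])
  then show "cyclic_coeff n (conn_poly * ones_poly) y = cyclic_coeff n (smult (int k) ones_poly) y"
    using card_S by (simp add: cyclic_coeff_smult cyclic_coeff_ones_poly[OF y])
qed

lemma modulus_dvd_conn_poly_power:
  "\<exists>W. cyclic_modulus n dvd conn_poly ^ j - (smult (fst (quad_rem alpha beta j)) conn_poly
     + [:snd (quad_rem alpha beta j):] + smult W ones_poly)"
proof (induction j)
  case 0
  show ?case by (intro exI[of _ 0]) (simp add: one_pCons)
next
  case (Suc j)
  define U where "U = fst (quad_rem alpha beta j)"
  define V where "V = snd (quad_rem alpha beta j)"
  obtain W where W: "cyclic_modulus n dvd conn_poly ^ j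
      - (smult U conn_poly + [:V:] + smult W ones_poly)"
    using Suc by (auto simp: U_def V_def)
  have "conn_poly ^ Suc j - (smult (fst (quad_rem alpha beta (Suc j))) conn_poly
        + [:snd (quad_rem alpha beta (Suc j)):] + smult (int mu * U + int k * W) ones_poly) =
      conn_poly * (conn_poly ^ j - (smult U conn_poly + [:V:] + smult W ones_poly))
      + smult U (conn_poly * conn_poly - (smult alpha conn_poly + [:beta:] + smult (int mu) ones_poly))
      + smult W (conn_poly * ones_poly - smult (int k) ones_poly)"
    by (simp add: U_def V_def algebra_simps smult_add_left smult_diff_left smult_add_right
        smult_diff_right)
  moreover have "cyclic_modulus n dvd \<dots>"
    using W modulus_dvd_conn_poly_square modulus_dvd_conn_poly_ones_poly
    by (intro dvd_add dvd_mult) (auto simp: dvd_smult)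
  ultimately show ?case by metis
qed

lemma cyclic_coeff_conn_poly_frobenius:
  assumes "0 \<le> y" and "y < n"
  shows "cyclic_coeff n (\<Sum>d\<in>nat ` S. monom 1 (q * d)) y = int (card {d \<in> S. (int q * d) mod n = y})"
  using S_range finite_S inj_on_nat_S
  by (simp add: sum.reindex cyclic_coeff_sum cyclic_coeff_monom less_le sum.If_cases Int_def)

text \<open>
  The coefficients of \<open>conn_poly\<^sup>q\<close> are computed twice: by reducing \<open>X\<^sup>q\<close> modulo the quadratic
  relation of \<open>conn_poly\<close>, and by the Frobenius congruence \<open>conn_poly\<^sup>q \<equiv> \<Sum>d\<in>S. X\<^sup>q\<^sup>d (mod q)\<close>.
\<close>

lemma multiplier_count_cong:
  assumes q: "prime q"
  obtains W where "\<And>y. 0 \<le> y \<Longrightarrow> y < n \<Longrightarrow> int q dvd int (card {d \<in> S. (int q * d) mod n = y})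
    - (fst (quad_rem alpha beta q) * of_bool (y \<in> S) + snd (quad_rem alpha beta q) * of_bool (y = 0) + W)"
proof -
  let ?U = "fst (quad_rem alpha beta q)" and ?V = "snd (quad_rem alpha beta q)"
  obtain W where "cyclic_modulus n dvd conn_poly ^ q - (smult ?U conn_poly + [:?V:] + smult W ones_poly)"
    using modulus_dvd_conn_poly_power by blast
  then obtain Q where Q: "conn_poly ^ q - (smult ?U conn_poly + [:?V:] + smult W ones_poly) = cyclic_modulus n * Q"
    by (elim dvdE)
  have "conn_poly = (\<Sum>d\<in>nat ` S. monom 1 d)"
    by (simp add: conn_poly_def sum.reindex inj_on_nat_S)
  then obtain R where R: "conn_poly ^ q - (\<Sum>d\<in>nat ` S. monom 1 (q * d)) = smult (int q) R"
    using prime_dvd_sum_monom_power_diff[OF q, of "nat ` S"] finite_S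
    by (auto elim!: dvdE simp: of_nat_mult_conv_smult)
  have key: "(\<Sum>d\<in>nat ` S. monom 1 (q * d)) - (smult ?U conn_poly + [:?V:] + smult W ones_poly) =
      cyclic_modulus n * Q - smult (int q) R"
    using Q R by (simp add: algebra_simps)
  have coeff_eq: "int (card {d \<in> S. (int q * d) mod n = y}) -
      (?U * of_bool (y \<in> S) + ?V * of_bool (y = 0) + W) = int q * - cyclic_coeff n R y"
    if y: "0 \<le> y" "y < n" for y
  proof -
    have "cyclic_coeff n (smult ?U conn_poly + [:?V:] + smult W ones_poly) y =
        ?U * of_bool (y \<in> S) + ?V * of_bool (y = 0) + W"
      by (simp add: cyclic_coeff_add cyclic_coeff_smult cyclic_coeff_conn_poly[OF y]
          cyclic_coeff_ones_poly[OF y] cyclic_coeff_const_in_range[OF y])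
    moreover have "cyclic_coeff n (cyclic_modulus n * Q - smult (int q) R) y = int q * - cyclic_coeff n R y"
      by (simp add: cyclic_coeff_diff cyclic_coeff_smult cyclic_coeff_modulus_mult[OF n_pos])
    ultimately show ?thesis
      using arg_cong[where f = "\<lambda>A. cyclic_coeff n A y", OF key]
      by (simp only: cyclic_coeff_diff cyclic_coeff_conn_poly_frobenius[OF y])
  qed
  show ?thesis
    by (rule that[of W]) (simp only: coeff_eq dvd_triv_left)
qed

end

section \<open>Multipliers\<close>

locale cyclic_pds_integral = cyclic_pds +
  fixes theta :: int
  assumes theta_root: "theta\<^sup>2 = alpha * theta + beta"
begin

text \<open>The eigenvalues of the graph other than \<open>k\<close> are \<open>\<theta>\<close> and \<open>\<lambda> - \<mu> - \<theta>\<close>.\<close>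

definition eigenvalue_gap :: int where
  "eigenvalue_gap = 2 * theta - alpha"

lemma eigenvalue_gap_nonzero:
  assumes "mu < k"
  shows "eigenvalue_gap \<noteq> 0"
proof
  assume "eigenvalue_gap = 0"
  then have "alpha = 2 * theta"
    by (simp add: eigenvalue_gap_def)
  have "beta = theta\<^sup>2 - alpha * theta"
    using theta_root by simp
  also have "\<dots> = - theta\<^sup>2"
    unfolding \<open>alpha = 2 * theta\<close> by (simp add: power2_eq_square)
  finally have "beta = - theta\<^sup>2" .
  then show False
    using assms by (smt (verit) zero_le_power2 of_nat_less_iff)
qed

lemma multiplier_count_cong_simple_root:
  assumes q: "prime q" and gap: "\<not> int q dvd eigenvalue_gap"
  obtains W where "\<And>y. 0 \<le> y \<Longrightarrow> y < n \<Longrightarrow>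
    int q dvd int (card {d \<in> S. (int q * d) mod n = y}) - (of_bool (y \<in> S) + W)"
proof -
  let ?U = "fst (quad_rem alpha beta q)" and ?V = "snd (quad_rem alpha beta q)"
  obtain W where W: "\<And>y. 0 \<le> y \<Longrightarrow> y < n \<Longrightarrow> int q dvd int (card {d \<in> S. (int q * d) mod n = y})
      - (?U * of_bool (y \<in> S) + ?V * of_bool (y = 0) + W)"
    using multiplier_count_cong[OF q] by blast
  have "int q dvd ?U - 1" "int q dvd ?V"
    using quad_rem_prime_simple_root[OF q theta_root] gap by (auto simp: eigenvalue_gap_def)
  then have "int q dvd (?U - 1) * of_bool (y \<in> S) + ?V * of_bool (y = 0)" for y
    by simp
  moreover have "int (card {d \<in> S. (int q * d) mod n = y}) - (of_bool (y \<in> S) + W) =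
      (int (card {d \<in> S. (int q * d) mod n = y}) - (?U * of_bool (y \<in> S) + ?V * of_bool (y = 0) + W))
      + ((?U - 1) * of_bool (y \<in> S) + ?V * of_bool (y = 0))" for y
    by (simp add: algebra_simps)
  ultimately show ?thesis
    using W by (intro that[of W]) (simp only: dvd_add)
qed

lemma multiplier_count_cong_double_root:
  assumes q: "prime q" and gap: "int q dvd eigenvalue_gap"
  obtains W where "\<And>y. 0 < y \<Longrightarrow> y < n \<Longrightarrow>
    int q dvd int (card {d \<in> S. (int q * d) mod n = y}) - W"
proof -
  let ?U = "fst (quad_rem alpha beta q)" and ?V = "snd (quad_rem alpha beta q)"
  obtain W where W: "\<And>y. 0 \<le> y \<Longrightarrow> y < n \<Longrightarrow> int q dvd int (card {d \<in> S. (int q * d) mod n = y})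
      - (?U * of_bool (y \<in> S) + ?V * of_bool (y = 0) + W)"
    using multiplier_count_cong[OF q] by blast
  have "int q dvd ?U"
    using quad_rem_prime_double_root[OF q theta_root] gap by (simp add: eigenvalue_gap_def)
  moreover have "int (card {d \<in> S. (int q * d) mod n = y}) - W =
      (int (card {d \<in> S. (int q * d) mod n = y}) - (?U * of_bool (y \<in> S) + ?V * of_bool (y = 0) + W))
      + ?U * of_bool (y \<in> S)" if "0 < y" for y
    using that by simp
  ultimately show ?thesis
    using W by (intro that[of W]) (simp only: dvd_add dvd_mult2 less_imp_le)
qed

lemma prime_multiplier:
  assumes q: "prime q" and "\<not> int q dvd n" and "\<not> int q dvd eigenvalue_gap" and d: "d \<in> S"
  shows "(int q * d) mod n \<in> S"
proof (rule ccontr)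
  assume notin: "(int q * d) mod n \<notin> S"
  obtain W where W: "\<And>y. 0 \<le> y \<Longrightarrow> y < n \<Longrightarrow>
      int q dvd int (card {e \<in> S. (int q * e) mod n = y}) - (of_bool (y \<in> S) + W)"
    using multiplier_count_cong_simple_root[OF q assms(3)] by blast
  have cop: "coprime (int q) n"
    using assms(2) q by (simp add: prime_imp_coprime)
  have preimage: "{e \<in> S. (int q * e) mod n = (int q * c) mod n} = S \<inter> {c}"
    if c: "0 \<le> c" "c < n" for c
  proof -
    have "e = c" if "e \<in> S" "(int q * e) mod n = (int q * c) mod n" for e
      using mult_mod_eq_imp_eq[OF cop that(2)] S_range[OF that(1)] c by simp
    then show ?thesis by auto
  qed
  have none: "{e \<in> S. (int q * e) mod n = 0} = {}"
    using preimage[of 0] n_pos zero_notin_S by simp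
  have "int q dvd - W"
    using W[OF order_refl n_pos, unfolded none] zero_notin_S by simp
  moreover have one: "{e \<in> S. (int q * e) mod n = (int q * d) mod n} = {d}"
    using preimage[of d] d S_range[OF d] by auto
  have "int q dvd 1 - W"
    using W[of "(int q * d) mod n", unfolded one] notin n_pos by simp
  ultimately have "int q dvd (1 - W) - (- W)"
    by (simp only: dvd_diff)
  then have "int q dvd 1"
    by simp
  then show False
    using q by simp
qed

lemma coprime_multiplier:
  assumes "x > 0" and "coprime x (nat \<bar>n * eigenvalue_gap\<bar>)" and "d \<in> S"
  shows "(int x * d) mod n \<in> S"
proof (rule mult_mod_closed_if_prime_mult_mod_closed[OF _ _ assms])
  show "S \<subseteq> {0..<n}"
    using S_range by force
next
  fix q e
  assume "prime q" "\<not> q dvd nat \<bar>n * eigenvalue_gap\<bar>" "e \<in> S"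
  then show "(int q * e) mod n \<in> S"
    using dvd_nat_abs_mult_if_dvd[of q n eigenvalue_gap] dvd_nat_abs_mult_if_dvd[of q eigenvalue_gap n]
    by (intro prime_multiplier) (auto simp: mult.commute)
qed

section \<open>Prime divisors of the order\<close>

lemma prime_dvd_card_mult_preimage:
  assumes p: "prime p" "int p dvd n" "int p dvd eigenvalue_gap" and y: "0 < y" "y < n"
  shows "p dvd card {e \<in> S. (int p * e) mod n = y}"
proof -
  obtain W where W: "\<And>y. 0 < y \<Longrightarrow> y < n \<Longrightarrow> int p dvd int (card {e \<in> S. (int p * e) mod n = y}) - W"
    using multiplier_count_cong_double_root[OF p(1,3)] by blast
  have "\<not> int p dvd 1"
    using prime_ge_2_nat[OF p(1)] by simp
  then have none: "{e \<in> S. (int p * e) mod n = 1} = {}"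
    by (rule mult_mod_preimage_empty[OF p(2)])
  have "int p \<le> n"
    using p(2) n_pos by (simp add: zdvd_imp_le)
  then have "1 < n"
    using prime_ge_2_nat[OF p(1)] by simp
  then have "int p dvd W"
    using W[OF zero_less_one, unfolded none] by simp
  then have "int p dvd (int (card {e \<in> S. (int p * e) mod n = y}) - W) + W"
    using W[OF y] by (intro dvd_add)
  then show ?thesis
    by simp
qed

text \<open>
  The elements \<open>e\<close> with \<open>p e = p d\<close> form the coset \<open>d + (n/p)\<int>\<^sub>n\<close> of size \<open>p\<close>; as their
  number in \<open>S\<close> is a positive multiple of \<open>p\<close>, the whole coset lies in \<open>S\<close>.
\<close>

lemma add_cofactor_mod_in_S:
  assumes p: "prime p" "int p dvd n" "int p dvd eigenvalue_gap"
    and d: "d \<in> S" "\<not> n div int p dvd d"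
  shows "(d + n div int p) mod n \<in> S"
proof -
  define m where "m = n div int p"
  have nm: "n = int p * m"
    using p(2) by (simp add: m_def)
  have "int p \<ge> 2"
    using p(1) prime_ge_2_nat by auto
  then have "m > 0"
    using nm n_pos by (simp add: zero_less_mult_iff)
  define y where "y = (int p * d) mod n"
  have "y \<noteq> 0"
  proof
    assume "y = 0"
    then have "int p * m dvd int p * d"
      using nm by (simp add: y_def mod_eq_0_iff_dvd)
    then show False
      using d(2) \<open>int p \<ge> 2\<close> by (simp add: m_def)
  qed
  moreover have "0 \<le> y" "y < n"
    using n_pos by (simp_all add: y_def)
  ultimately have y: "0 < y" "y < n"
    by simp_all
  define A where "A = {e \<in> S. (int p * e) mod n = y}"
  have "p dvd card A" and "d \<in> A" and "finite A"
    using prime_dvd_card_mult_preimage[OF p y] d finite_S by (auto simp: A_def y_def)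
  then have "p \<le> card A"
    by (intro dvd_imp_le) (auto simp: card_gt_0_iff)
  define T where "T = (\<lambda>j. (d + int j * m) mod n) ` {..<p}"
  have "A \<subseteq> T"
  proof
    fix e assume "e \<in> A"
    then show "e \<in> T"
      using mult_mod_eq_imp_mem_coset[OF nm \<open>m > 0\<close>, of e d] S_range[of e]
      by (simp add: A_def y_def T_def)
  qed
  moreover have "finite T" "card T \<le> p"
    using card_image_le[of "{..<p}"] by (simp_all add: T_def)
  ultimately have "A = T"
    using \<open>p \<le> card A\<close> card_mono[of T A] by (intro card_subset_eq) auto
  moreover have "(d + int 1 * m) mod n \<in> T"
    using \<open>int p \<ge> 2\<close> unfolding T_def by (intro imageI) simp
  ultimately show ?thesis
    unfolding A_def m_def by auto
qed

lemma mult_mod_in_S_if_cofactor_dvd: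
  assumes p: "prime p" "int p dvd n" and "mu < k"
    and d: "d \<in> S" "n div int p dvd d" and c: "\<not> int p dvd c"
  shows "(c * d) mod n \<in> S"
proof -
  have "coprime (c mod int p) (int p)"
    using prime_imp_coprime[of "int p" c] p(1) c by (simp add: coprime_commute)
  then have "coprime (nat (c mod int p)) p"
    using p(1) by (simp add: coprime_int_iff[symmetric] prime_gt_0_nat)
  moreover have "nat \<bar>n * eigenvalue_gap\<bar> > 0"
    using n_pos eigenvalue_gap_nonzero[OF \<open>mu < k\<close>] by simp
  ultimately obtain x where x: "x > 0" "[x = nat (c mod int p)] (mod p)"
    "coprime x (nat \<bar>n * eigenvalue_gap\<bar>)"
    using exists_coprime_cong[of p] p(1) prime_gt_0_nat by metis
  have "[int x = c] (mod int p)"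
    using x(2) p(1) by (simp add: cong_int_iff[symmetric] prime_gt_0_nat cong_def)
  then have "int p * (n div int p) dvd (int x - c) * d"
    using d(2) by (intro mult_dvd_mono) (simp_all add: cong_iff_dvd_diff)
  then have "(int x * d) mod n = (c * d) mod n"
    using p(2) by (simp add: mod_eq_dvd_iff left_diff_distrib)
  then show ?thesis
    using coprime_multiplier[OF x(1,3) d(1)] by simp
qed

lemma cofactor_bounds:
  assumes "prime p" and "int p dvd n"
  shows "0 < n div int p" and "n div int p < n"
proof -
  define m where "m = n div int p"
  have "n = int p * m"
    using assms(2) by (simp add: m_def)
  moreover have "int p \<ge> 2"
    using prime_ge_2_nat[OF assms(1)] by simp
  ultimately show "0 < n div int p" "n div int p < n"
    using n_pos by (simp_all add: zero_less_mult_iff m_def[symmetric])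
qed

lemma cofactor_multiple_in_S:
  assumes p: "prime p" "int p dvd n" and "mu < k"
    and ij: "1 \<le> i" "i < int p" "1 \<le> j" "j < int p" and i_in: "i * (n div int p) \<in> S"
  shows "j * (n div int p) \<in> S"
proof -
  have pi: "prime (int p)"
    using p(1) by simp
  have "\<not> int p dvd i" "\<not> int p dvd j"
    using ij by (auto dest: zdvd_imp_le)
  then obtain i' where i': "[i * i' = 1] (mod int p)"
    using cong_solve_coprime_int prime_imp_coprime[OF pi] by (metis coprime_commute)
  then have "[i' * j * i = j] (mod int p)"
    using cong_scalar_left[OF i', of j] by (simp add: ac_simps)
  then have "\<not> int p dvd i' * j"
    using \<open>\<not> int p dvd j\<close> by (metis cong_dvd_iff dvd_mult2)
  then have in_S: "(i' * j * (i * (n div int p))) mod n \<in> S"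
    using mult_mod_in_S_if_cofactor_dvd[OF p \<open>mu < k\<close> i_in] by simp
  have nm: "n = int p * (n div int p)"
    using p(2) by simp
  have "int p * (n div int p) dvd (i' * j * i - j) * (n div int p)"
    using \<open>[i' * j * i = j] (mod int p)\<close> by (intro mult_dvd_mono) (simp_all add: cong_iff_dvd_diff)
  moreover have "i' * j * (i * (n div int p)) - j * (n div int p) = (i' * j * i - j) * (n div int p)"
    by (simp add: algebra_simps)
  ultimately have "(i' * j * (i * (n div int p))) mod n = (j * (n div int p)) mod n"
    by (simp only: mod_eq_dvd_iff nm[symmetric])
  moreover have "n div int p > 0"
    using cofactor_bounds[OF p] by simp
  then have "0 \<le> j * (n div int p)" "j * (n div int p) < int p * (n div int p)"
    using ij by (simp_all add: mult_strict_right_mono)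
  ultimately show ?thesis
    using in_S nm by simp
qed

lemma cofactor_multiple_in_S_iff:
  assumes p: "prime p" "int p dvd n" and "mu < k"
    and y: "0 < y" "y < n" "n div int p dvd y"
  shows "y \<in> S \<longleftrightarrow> n div int p \<in> S"
proof -
  obtain j where j: "1 \<le> j" "j < int p" "y = j * (n div int p)"
    using dvd_cofactor_imp_multiple[of n p "n div int p" y] p(2) y by auto
  have "int p \<ge> 2"
    using p(1) prime_ge_2_nat by auto
  then show ?thesis
    using cofactor_multiple_in_S[OF p \<open>mu < k\<close>, of j 1] cofactor_multiple_in_S[OF p \<open>mu < k\<close>, of 1 j] j
    by auto
qed

lemma add_cofactor_mod_in_S_if_cofactor_notin:
  assumes p: "prime p" "int p dvd n" "int p dvd eigenvalue_gap" and "mu < k"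
    and "n div int p \<notin> S" and d: "d \<in> S"
  shows "(d + n div int p) mod n \<in> S"
proof -
  have "\<not> n div int p dvd d"
    using cofactor_multiple_in_S_iff[OF p(1,2) \<open>mu < k\<close>, of d] S_range[OF d] d assms(5) by auto
  then show ?thesis
    by (rule add_cofactor_mod_in_S[OF p d])
qed

lemma cofactor_diff_mod_in_S:
  assumes p: "prime p" "int p dvd n" "int p dvd eigenvalue_gap" and "mu < k"
    and m: "n div int p \<in> S" and z: "z \<in> S" "z \<noteq> n div int p"
  shows "(n div int p - z) mod n \<in> S"
proof (cases "n div int p dvd (- z) mod n")
  case False
  then show ?thesis
    using add_cofactor_mod_in_S[OF p neg_mod_in_S[OF z(1)]] by (simp add: mod_add_left_eq)
next
  case True
  define m where "m = n div int p"
  have "0 < m" "m < n"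
    using cofactor_bounds[OF p(1,2)] by (simp_all add: m_def)
  have "m dvd n"
    unfolding m_def using p(2) by (metis dvd_div_mult_self dvd_triv_left)
  then have "m dvd (m - z) mod n"
    using True by (simp add: m_def dvd_mod_iff)
  moreover have "(m - z) mod n \<noteq> 0"
    using z S_range[of z] \<open>0 < m\<close> \<open>m < n\<close>
    by (auto simp: m_def[symmetric] mod_eq_0_iff_dvd mod_eq_dvd_iff[symmetric])
  then have "0 < (m - z) mod n"
    using n_pos pos_mod_sign[of n "m - z"] by linarith
  ultimately show ?thesis
    using cofactor_multiple_in_S_iff[OF p(1,2) \<open>mu < k\<close>, of "(m - z) mod n"] m n_pos
    by (simp add: m_def)
qed

lemma prime_divisor_not_dvd_eigenvalue_gap:
  assumes p: "prime p" "int p dvd n" and mu: "0 < mu" "mu < k" and "S \<noteq> {1..<n}"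
  shows "\<not> int p dvd eigenvalue_gap"
proof
  assume gap: "int p dvd eigenvalue_gap"
  show False
  proof (cases "n div int p \<in> S")
    case False
    then have "mu = k"
      using mu_eq_k_if_add_closed[of "n div int p"] cofactor_bounds[OF p]
        add_cofactor_mod_in_S_if_cofactor_notin[OF p gap mu(2) False]
      by simp
    then show False
      using mu by simp
  next
    case True
    then have "k \<le> lam + 1"
      using k_le_Suc_lam_if_diffs_closed cofactor_diff_mod_in_S[OF p gap mu(2)] by blast
    then show False
      using Suc_lam_less_k mu(1) assms(5) by simp
  qed
qed

lemma non_multiple_in_S_iff:
  assumes p: "prime p" "int p dvd n" "\<not> int p dvd eigenvalue_gap"
    and y: "0 \<le> y" "y < n" "\<not> int p dvd y"
  shows "y \<in> S \<longleftrightarrow> 1 \<in> S"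
proof -
  obtain W where W: "\<And>y. 0 \<le> y \<Longrightarrow> y < n \<Longrightarrow>
      int p dvd int (card {e \<in> S. (int p * e) mod n = y}) - (of_bool (y \<in> S) + W)"
    using multiplier_count_cong_simple_root[OF p(1,3)] by blast
  have "\<not> int p dvd 1"
    using prime_ge_2_nat[OF p(1)] by simp
  have "int p \<le> n"
    using p(2) n_pos by (simp add: zdvd_imp_le)
  then have "1 < n"
    using prime_ge_2_nat[OF p(1)] by simp
  have "int p dvd 0 - (of_bool (x \<in> S) + W)" if "0 \<le> x" "x < n" "\<not> int p dvd x" for x
    using W[OF that(1,2), unfolded mult_mod_preimage_empty[OF p(2) that(3)]] by (simp only: card.empty of_nat_0)
  from this[OF zero_le_one \<open>1 < n\<close> \<open>\<not> int p dvd 1\<close>] this[OF y]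
  have "int p dvd (0 - (of_bool (1 \<in> S) + W)) - (0 - (of_bool (y \<in> S) + W))"
    by (rule dvd_diff)
  then have "int p dvd of_bool (y \<in> S) - of_bool (1 \<in> S)"
    by simp
  then show ?thesis
    using \<open>\<not> int p dvd 1\<close> by (cases "y \<in> S"; cases "1 \<in> S") simp_all
qed

lemma prime_divisor_dvd_eigenvalue_gap:
  assumes p: "prime p" "int p dvd n" and mu: "0 < mu" "mu < k" and "S \<noteq> {1..<n}"
  shows "int p dvd eigenvalue_gap"
proof (rule ccontr)
  assume gap: "\<not> int p dvd eigenvalue_gap"
  have "int p > 1"
    using prime_gt_1_nat[OF p(1)] by simp
  have uniform: "y \<in> S \<longleftrightarrow> 1 \<in> S" if "0 \<le> y" "y < n" "\<not> int p dvd y" for y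
    using non_multiple_in_S_iff[OF p gap that] .
  show False
  proof (cases "1 \<in> S")
    case False
    have "int p dvd s" if "s \<in> S" for s
      using uniform[of s] S_range[OF that] that False by auto
    then have "mu = 0"
      by (rule mu_eq_0_if_multiples[OF p(2) \<open>int p > 1\<close>])
    then show False
      using mu by simp
  next
    case True
    then have "mu = k"
      using mu_eq_k_if_non_multiples_in_S[OF p(2) \<open>int p > 1\<close> assms(5)] uniform by blast
    then show False
      using mu by simp
  qed
qed

theorem trivial_parameters: "mu = 0 \<or> k \<le> mu \<or> S = {1..<n}"
proof (rule ccontr)
  assume "\<not> ?thesis"
  then have mu: "0 < mu" "mu < k" and proper: "S \<noteq> {1..<n}"
    by auto
  have "nat n \<noteq> 1"
    using proper conn by (auto simp: circulant_conn_def)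
  then obtain p where p: "prime p" "p dvd nat n"
    using prime_factor_nat by blast
  then have "int p dvd int (nat n)"
    by (simp only: int_dvd_int_iff)
  then have "int p dvd n"
    using n_pos by (simp only: int_nat_eq if_True less_imp_le)
  then show False
    using prime_divisor_dvd_eigenvalue_gap[OF p(1) _ mu proper]
      prime_divisor_not_dvd_eigenvalue_gap[OF p(1) _ mu proper]
    by blast
qed

end

theorem proposition3p11:
  fixes V :: "'a set" and E :: "'a \<Rightarrow> 'a \<Rightarrow> bool"
  assumes "nontrivial_srg V E"
    and "neumaier_graph V E"
    and "circulant_graph V E"
  shows False
proof -
  obtain v k lam mu where srg: "strongly_regular V E v k lam mu" and mu: "0 < mu" "mu < k"
    using assms(1) unfolding nontrivial_srg_def by blast
  interpret srg V E v k lam mu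
    by (rule srg.intro) (rule srg)
  obtain C a where clique: "regular_clique V E C a"
    using assms(2) unfolding neumaier_graph_def by blast
  obtain n S where conn: "circulant_conn n S" and iso: "graph_iso V E {0..<n} (circ_adj n S)"
    using assms(3) unfolding circulant_graph_def by blast
  interpret cyclic_pds_integral n S k lam mu "int (card C) - 1 - int a"
    using circulant_cyclic_pds[OF conn iso] regular_clique_eigenvalue[OF clique]
    by (simp add: cyclic_pds_integral_def cyclic_pds_integral_axioms_def)
  show False
    using trivial_parameters mu circulant_conn_proper[OF conn iso] by simp
qed

end
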